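(* For all integers $m,n\geq 1$, \[p^{ed}_{od}(2m,2n)=p^{ed}_{od}(2m,2n-1).\]
   Context: $\mathcal{P}^{ed}_{od}$ is the set of integer partitions such that: - all parts are distinct; - every odd part is smaller than every even part; - at least one odd part appears. $p^{ed}_{od}(m,n)$ is the number of partitions of $n$ in $\mathcal{P}^{ed}_{od}$ with exactly $m$ parts. *)

theory Defs
  imports Main
begin

text \<open>A partition into distinct parts is represented by its (finite) set of parts,
  all of which are positive integers.\<close>

definition P_ed_od :: "nat set set" where
  "P_ed_od = {S. finite S \<and> 0 \<notin> S
      \<and> (\<forall>a\<in>S. \<forall>b\<in>S. odd a \<longrightarrow> even b \<longrightarrow> a < b)
      \<and> (\<exists>a\<in>S. odd a)}"

definition p_ed_od :: "nat \<Rightarrow> nat \<Rightarrow> nat" where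
  "p_ed_od m n = card {S \<in> P_ed_od. \<Sum>S = n \<and> card S = m}"

end

theory Submission
  imports Defs
begin

text \<open>Lowering the largest odd part by one turns it into the new smallest even part; raising
  the smallest even part by one turns it back into the largest odd part. The two maps are
  mutually inverse, change the sum by one and keep the number of parts. A partition of an
  even number into an even number of parts has an even, hence at least two, odd parts, so
  lowering keeps an odd part; a partition of an odd number into an even number of parts has
  an odd number of odd parts, hence an even part that can be raised.\<close>

definition lower_max_odd :: "nat set \<Rightarrow> nat set" where
  "lower_max_odd S = (let q = Max {x \<in> S. odd x} in insert (q - 1) (S - {q}))"

definition raise_min_even :: "nat set \<Rightarrow> nat set" where
  "raise_min_even T = (let e = Min {x \<in> T. even x} in insert (e + 1) (T - {e}))"

lemma P_ed_odD:
  assumes "S \<in> P_ed_od"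
  shows "finite S" "0 \<notin> S" "\<And>a b. a \<in> S \<Longrightarrow> b \<in> S \<Longrightarrow> odd a \<Longrightarrow> even b \<Longrightarrow> a < b"
    "\<exists>a\<in>S. odd a"
  using assms by (auto simp: P_ed_od_def)

lemma even_sum_iff_even_card_odd:
  fixes S :: "nat set"
  assumes "finite S"
  shows "even (\<Sum>S) \<longleftrightarrow> even (card {x \<in> S. odd x})"
proof -
  have "card {x \<in> S. odd x} = (\<Sum>x\<in>S. if odd x then 1 else 0)"
    unfolding card_eq_sum using sum.inter_filter[OF assms] .
  also have "\<dots> = (\<Sum>x\<in>S. x mod 2)"
    by (rule sum.cong) (simp_all add: mod2_eq_if)
  finally have "(\<Sum>S) mod 2 = card {x \<in> S. odd x} mod 2"
    by (simp only: mod_sum_eq)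
  then show ?thesis
    by (simp only: even_iff_mod_2_eq_zero)
qed

lemma sum_replace:
  fixes S :: "nat set"
  assumes "finite S" "x \<in> S" "y \<notin> S"
  shows "\<Sum>(insert y (S - {x})) + x = \<Sum>S + y"
  using assms by (simp add: sum.remove)

lemma card_replace:
  assumes "finite S" "x \<in> S" "y \<notin> S"
  shows "card (insert y (S - {x})) = card S"
proof -
  have "card (insert y (S - {x})) = Suc (card (S - {x}))"
    using assms by simp
  then show ?thesis
    using card_Suc_Diff1[OF assms(1,2)] by simp
qed

lemma replace_inverse:
  assumes "x \<in> S" "y \<notin> S"
  shows "insert x (insert y (S - {x}) - {y}) = S"
  using assms by blast

lemma max_odd_part:
  assumes "S \<in> P_ed_od"
  defines "q \<equiv> Max {x \<in> S. odd x}"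
  shows "q \<in> S" "odd q" "\<And>a. a \<in> S \<Longrightarrow> odd a \<Longrightarrow> a \<le> q" "\<And>b. b \<in> S \<Longrightarrow> even b \<Longrightarrow> q < b"
    "q - 1 \<notin> S"
proof -
  have fin: "finite {x \<in> S. odd x}" and ne: "{x \<in> S. odd x} \<noteq> {}"
    using P_ed_odD[OF assms(1)] by auto
  show q: "q \<in> S" "odd q"
    using Max_in[OF fin ne] by (auto simp: q_def)
  show "\<And>a. a \<in> S \<Longrightarrow> odd a \<Longrightarrow> a \<le> q"
    using fin by (simp add: q_def)
  show less: "\<And>b. b \<in> S \<Longrightarrow> even b \<Longrightarrow> q < b"
    using P_ed_odD(3)[OF assms(1)] q by blast
  show "q - 1 \<notin> S"
    using less[of "q - 1"] \<open>odd q\<close> by fastforce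
qed

lemma sum_lower_max_odd:
  assumes "S \<in> P_ed_od"
  shows "\<Sum>(lower_max_odd S) + 1 = \<Sum>S"
proof -
  define q where "q = Max {x \<in> S. odd x}"
  note q = max_odd_part[OF assms, folded q_def]
  have "\<Sum>(insert (q - 1) (S - {q})) + q = \<Sum>S + (q - 1)"
    using sum_replace[OF P_ed_odD(1)[OF assms] q(1,5)] .
  then show ?thesis
    using odd_pos[OF q(2)] by (simp add: lower_max_odd_def Let_def q_def[symmetric])
qed

lemma card_lower_max_odd:
  assumes "S \<in> P_ed_od"
  shows "card (lower_max_odd S) = card S"
  using card_replace[OF P_ed_odD(1) max_odd_part(1,5)] assms
  by (simp add: lower_max_odd_def Let_def)

lemma even_part_lower_max_odd:
  assumes "S \<in> P_ed_od"
  shows "\<exists>b\<in>lower_max_odd S. even b"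
proof
  define q where "q = Max {x \<in> S. odd x}"
  show "q - 1 \<in> lower_max_odd S"
    by (simp add: lower_max_odd_def Let_def q_def)
  show "even (q - 1)"
    using max_odd_part(2)[OF assms, folded q_def] by simp
qed

lemma raise_min_even_lower_max_odd:
  assumes "S \<in> P_ed_od"
  shows "raise_min_even (lower_max_odd S) = S"
proof -
  define q where "q = Max {x \<in> S. odd x}"
  note q = max_odd_part[OF assms, folded q_def]
  have lower: "lower_max_odd S = insert (q - 1) (S - {q})"
    by (simp add: lower_max_odd_def Let_def q_def)
  have "{x \<in> lower_max_odd S. even x} = insert (q - 1) {x \<in> S. even x}"
    using q(2) by (auto simp: lower)
  moreover have "finite {x \<in> S. even x}"
    using P_ed_odD(1)[OF assms] by simp
  moreover have "q - 1 \<le> b" if "b \<in> S" "even b" for b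
    using q(4)[OF that] by simp
  ultimately have "Min {x \<in> lower_max_odd S. even x} = q - 1"
    by (auto intro: Min_eqI)
  then show ?thesis
    using replace_inverse[OF q(1,5)] q(2) by (simp add: raise_min_even_def lower odd_pos)
qed

lemma lower_max_odd_in_P_ed_od:
  assumes "S \<in> P_ed_od" and "1 < card {x \<in> S. odd x}"
  shows "lower_max_odd S \<in> P_ed_od"
proof -
  define q where "q = Max {x \<in> S. odd x}"
  note q = max_odd_part[OF assms(1), folded q_def]
  have "\<not> {x \<in> S. odd x} \<subseteq> {q}"
  proof
    assume "{x \<in> S. odd x} \<subseteq> {q}"
    then have "card {x \<in> S. odd x} \<le> card {q}"
      by (rule card_mono[rotated]) simp
    with assms(2) show False
      by simp
  qed
  then obtain a where a: "a \<in> S" "odd a" "a \<noteq> q"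
    by blast
  have odd_below: "c + 2 \<le> q" if "c \<in> S" "odd c" "c \<noteq> q" for c
  proof -
    have "c \<le> q"
      using q(3) that(1,2) .
    then show ?thesis
      using q(2) that(2,3) by presburger
  qed
  have "1 \<le> a"
    using odd_pos[OF a(2)] by simp
  with odd_below[OF a] have q3: "3 \<le> q"
    by simp
  have lower: "lower_max_odd S = insert (q - 1) (S - {q})"
    by (simp add: lower_max_odd_def Let_def q_def)
  show ?thesis
    unfolding lower P_ed_od_def
  proof (intro CollectI conjI ballI impI)
    show "finite (insert (q - 1) (S - {q}))"
      using P_ed_odD(1)[OF assms(1)] by simp
    show "0 \<notin> insert (q - 1) (S - {q})"
      using P_ed_odD(2)[OF assms(1)] q3 by simp
    show "\<exists>c\<in>insert (q - 1) (S - {q}). odd c"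
      using a by blast
  next
    fix c b
    assume c: "c \<in> insert (q - 1) (S - {q})" "odd c" and b: "b \<in> insert (q - 1) (S - {q})" "even b"
    have "c \<noteq> q - 1"
      using c(2) q(2) by presburger
    then have c_in: "c \<in> S" "c \<noteq> q"
      using c(1) by simp_all
    show "c < b"
    proof (cases "b = q - 1")
      case True
      then show ?thesis
        using odd_below[OF c_in(1) c(2) c_in(2)] by simp
    next
      case False
      then show ?thesis
        using b P_ed_odD(3)[OF assms(1) c_in(1) _ c(2)] by simp
    qed
  qed
qed

lemma min_even_part:
  assumes "T \<in> P_ed_od" and "\<exists>b\<in>T. even b"
  defines "e \<equiv> Min {x \<in> T. even x}"
  shows "e \<in> T" "even e" "\<And>b. b \<in> T \<Longrightarrow> even b \<Longrightarrow> e \<le> b" "\<And>a. a \<in> T \<Longrightarrow> odd a \<Longrightarrow> a < e"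
    "e + 1 \<notin> T"
proof -
  have fin: "finite {x \<in> T. even x}" and ne: "{x \<in> T. even x} \<noteq> {}"
    using P_ed_odD(1)[OF assms(1)] assms(2) by auto
  show e: "e \<in> T" "even e"
    using Min_in[OF fin ne] by (auto simp: e_def)
  show "\<And>b. b \<in> T \<Longrightarrow> even b \<Longrightarrow> e \<le> b"
    using fin by (simp add: e_def)
  show less: "\<And>a. a \<in> T \<Longrightarrow> odd a \<Longrightarrow> a < e"
    using P_ed_odD(3)[OF assms(1)] e by blast
  show "e + 1 \<notin> T"
    using less[of "e + 1"] \<open>even e\<close> by fastforce
qed

lemma sum_raise_min_even:
  assumes "T \<in> P_ed_od" and "\<exists>b\<in>T. even b"
  shows "\<Sum>(raise_min_even T) = \<Sum>T + 1"
  using sum_replace[OF P_ed_odD(1) min_even_part(1,5)] assms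
  by (simp add: raise_min_even_def Let_def)

lemma card_raise_min_even:
  assumes "T \<in> P_ed_od" and "\<exists>b\<in>T. even b"
  shows "card (raise_min_even T) = card T"
  using card_replace[OF P_ed_odD(1) min_even_part(1,5)] assms
  by (simp add: raise_min_even_def Let_def)

lemma card_odd_raise_min_even:
  assumes "T \<in> P_ed_od" and "\<exists>b\<in>T. even b"
  shows "card {x \<in> raise_min_even T. odd x} = Suc (card {x \<in> T. odd x})"
proof -
  define e where "e = Min {x \<in> T. even x}"
  note e = min_even_part[OF assms, folded e_def]
  have "raise_min_even T = insert (e + 1) (T - {e})"
    by (simp add: raise_min_even_def Let_def e_def)
  then have "{x \<in> raise_min_even T. odd x} = insert (e + 1) {x \<in> T. odd x}"
    using e(2) by auto
  moreover have "finite {x \<in> T. odd x}" "e + 1 \<notin> {x \<in> T. odd x}"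
    using P_ed_odD(1)[OF assms(1)] e(5) by simp_all
  ultimately show ?thesis
    by simp
qed

lemma lower_max_odd_raise_min_even:
  assumes "T \<in> P_ed_od" and "\<exists>b\<in>T. even b"
  shows "lower_max_odd (raise_min_even T) = T"
proof -
  define e where "e = Min {x \<in> T. even x}"
  note e = min_even_part[OF assms, folded e_def]
  have raise: "raise_min_even T = insert (e + 1) (T - {e})"
    by (simp add: raise_min_even_def Let_def e_def)
  have "{x \<in> raise_min_even T. odd x} = insert (e + 1) {x \<in> T. odd x}"
    using e(2) by (auto simp: raise)
  moreover have "finite {x \<in> T. odd x}"
    using P_ed_odD(1)[OF assms(1)] by simp
  moreover have "a \<le> e + 1" if "a \<in> T" "odd a" for a
    using e(4)[OF that] by simp
  ultimately have "Max {x \<in> raise_min_even T. odd x} = e + 1"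
    by (auto intro: Max_eqI)
  then show ?thesis
    using replace_inverse[OF e(1,5)] by (simp add: lower_max_odd_def raise)
qed

lemma raise_min_even_in_P_ed_od:
  assumes "T \<in> P_ed_od" and "\<exists>b\<in>T. even b"
  shows "raise_min_even T \<in> P_ed_od"
proof -
  define e where "e = Min {x \<in> T. even x}"
  note e = min_even_part[OF assms, folded e_def]
  have raise: "raise_min_even T = insert (e + 1) (T - {e})"
    by (simp add: raise_min_even_def Let_def e_def)
  show ?thesis
    unfolding raise P_ed_od_def
  proof (intro CollectI conjI ballI impI)
    show "finite (insert (e + 1) (T - {e}))"
      using P_ed_odD(1)[OF assms(1)] by simp
    show "0 \<notin> insert (e + 1) (T - {e})"
      using P_ed_odD(2)[OF assms(1)] by simp
    show "\<exists>a\<in>insert (e + 1) (T - {e}). odd a"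
      using e(2) by simp
  next
    fix a b
    assume a: "a \<in> insert (e + 1) (T - {e})" "odd a" and b: "b \<in> insert (e + 1) (T - {e})" "even b"
    have "b \<in> T" "b \<noteq> e"
      using b e(2) by auto
    then have "e + 2 \<le> b"
      using e(2) e(3)[of b] b(2) by presburger
    then show "a < b"
      using a P_ed_odD(3)[OF assms(1) _ \<open>b \<in> T\<close> a(2) b(2)] by auto
  qed
qed

lemma bij_betw_lower_max_odd:
  "bij_betw lower_max_odd
    {S \<in> P_ed_od. \<Sum>S = Suc n \<and> card S = k \<and> 1 < card {x \<in> S. odd x}}
    {T \<in> P_ed_od. \<Sum>T = n \<and> card T = k \<and> (\<exists>b\<in>T. even b)}"
  (is "bij_betw _ ?A ?B")
proof (rule bij_betw_byWitness[where f' = raise_min_even])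
  show "lower_max_odd ` ?A \<subseteq> ?B"
  proof (rule image_subsetI)
    fix S
    assume "S \<in> ?A"
    then have S: "S \<in> P_ed_od" "\<Sum>S = Suc n" "card S = k" "1 < card {x \<in> S. odd x}"
      by simp_all
    show "lower_max_odd S \<in> ?B"
      using sum_lower_max_odd[OF S(1)] card_lower_max_odd[OF S(1)]
        lower_max_odd_in_P_ed_od[OF S(1,4)] even_part_lower_max_odd[OF S(1)] S(2,3)
      by simp
  qed
  show "raise_min_even ` ?B \<subseteq> ?A"
  proof (rule image_subsetI)
    fix T
    assume "T \<in> ?B"
    then have T: "T \<in> P_ed_od" "\<Sum>T = n" "card T = k" "\<exists>b\<in>T. even b"
      by simp_all
    have "card {x \<in> T. odd x} \<noteq> 0"
      using P_ed_odD(1,4)[OF T(1)] by auto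
    then show "raise_min_even T \<in> ?A"
      using sum_raise_min_even[OF T(1,4)] card_raise_min_even[OF T(1,4)]
        raise_min_even_in_P_ed_od[OF T(1,4)] card_odd_raise_min_even[OF T(1,4)] T(2,3)
      by simp
  qed
qed (simp_all add: raise_min_even_lower_max_odd lower_max_odd_raise_min_even)

lemma one_less_card_odd_if_even_sum:
  assumes "S \<in> P_ed_od" and "even (\<Sum>S)"
  shows "1 < card {x \<in> S. odd x}"
proof -
  have "card {x \<in> S. odd x} \<noteq> 0"
    using P_ed_odD(1,4)[OF assms(1)] by auto
  moreover have "even (card {x \<in> S. odd x})"
    using even_sum_iff_even_card_odd[OF P_ed_odD(1)[OF assms(1)]] assms(2) by simp
  ultimately show ?thesis
    by presburger
qed

lemma even_part_if_odd_sum_even_card: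
  assumes "T \<in> P_ed_od" and "odd (\<Sum>T)" and "even (card T)"
  shows "\<exists>b\<in>T. even b"
proof (rule ccontr)
  assume "\<not> (\<exists>b\<in>T. even b)"
  then have "{x \<in> T. odd x} = T"
    by auto
  then show False
    using even_sum_iff_even_card_odd[OF P_ed_odD(1)[OF assms(1)]] assms(2,3) by simp
qed

theorem mainTheorem7:
  fixes m n :: nat
  assumes "m \<ge> 1" and "n \<ge> 1"
  shows "p_ed_od (2*m) (2*n) = p_ed_od (2*m) (2*n - 1)"
proof -
  have Suc_pred: "Suc (2*n - 1) = 2*n" and odd_pred: "odd (2*n - 1)"
    using assms(2) by presburger+
  have even_sum: "{S \<in> P_ed_od. \<Sum>S = 2*n \<and> card S = 2*m}
      = {S \<in> P_ed_od. \<Sum>S = Suc (2*n - 1) \<and> card S = 2*m \<and> 1 < card {x \<in> S. odd x}}"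
    unfolding Suc_pred using one_less_card_odd_if_even_sum by auto
  have odd_sum: "{T \<in> P_ed_od. \<Sum>T = 2*n - 1 \<and> card T = 2*m}
      = {T \<in> P_ed_od. \<Sum>T = 2*n - 1 \<and> card T = 2*m \<and> (\<exists>b\<in>T. even b)}"
    using even_part_if_odd_sum_even_card odd_pred by auto
  show ?thesis
    unfolding p_ed_od_def even_sum odd_sum by (rule bij_betw_same_card[OF bij_betw_lower_max_odd])
qed

end
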